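(* Let $(G,\vec E,0,\tau)$ be a game-graph with associated Boolean function $L$. Let $${\cal Z}_{\rm strat}:=\{Z(\sigma_1):\sigma_1\in{\cal S}_1\},\qquad {\cal A}_{\rm strat}:=\{A(\sigma_2):\sigma_2\in{\cal S}_2\}.$$ Then $${\cal Z}(L)\subset{\cal Z}_{\rm strat}\subset{\cal Z}^\uparrow(L)\qquad\text{and}\qquad{\cal A}(L)\subset{\cal A}_{\rm strat}\subset{\cal A}^\uparrow(L).$$
   Context: **Game-graph.** A game-graph is a quadruple $(G,\vec E,0,\tau)$ where: - $(G,\vec E)$ is a finite acyclic directed graph; - $0\in G$ is such that every $v\in G$ is reachable from $0$ by a directed path; - $\tau:\mathring G\to\{1,2\}$. Here ${\cal O}(v):=\{w:(v,w)\in\vec E\}$, $\partial G:=\{v:{\cal O}(v)=\emptyset\}$ (possible outcomes), $\mathring G:=G\setminus\partial G$, and $\mathring G^i:=\{v\in\mathring G:\tau(v)=i\}$ (Alice moves at $\tau=1$, Bob at $\tau=2$). **Strategies.** A strategy for Alice is a map $\sigma_1$ on $\mathring G^1$ with $\sigma_1(v)\in{\cal O}(v)$; strategies $\sigma_2$ for Bob are defined similarly on $\mathring G^2$. ${\cal S}_1$ and ${\cal S}_2$ denote the sets of strategies. Given $\sigma_1,\sigma_2$, there is a unique path $0=v_0,\dots,v_n$ with $v_n\in\partial G$ and $v_{k+1}=\sigma_{\tau(v_k)}(v_k)$; set $o(\sigma_1,\sigma_2):=v_n$. Define $$Z(\sigma_1):=\{o(\sigma_1,\sigma'):\sigma'\in{\cal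 S}_2\},\qquad A(\sigma_2):=\{o(\sigma',\sigma_2):\sigma'\in{\cal S}_1\}.$$ **Boolean function.** For $x:\partial G\to\{0,1\}$ extend to $\bar x$ on $G$ by $\bar x=x$ on $\partial G$, $\bar x(v)=\min_{w\in{\cal O}(v)}\bar x(w)$ for $v\in\mathring G^1$, and $\bar x(v)=\max_{w\in{\cal O}(v)}\bar x(w)$ for $v\in\mathring G^2$. Set $L(x):=\bar x(0)$, a monotone Boolean function on $\{0,1\}^{\partial G}$. **One-sets and zero-sets.** A one-set of $L$ is $A\subset\partial G$ with $L(1_A)=1$; a zero-set is $Z\subset\partial G$ with $L(1-1_Z)=0$; minimal means containing no other such set as a proper subset. ${\cal A}^\uparrow(L)$ and ${\cal Z}^\uparrow(L)$ denote the sets of one-sets and zero-sets, and ${\cal A}(L)$ and ${\cal Z}(L)$ the minimal ones. *)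

theory Defs
  imports Main
begin

text \<open>A game-graph (G, E, 0, tau): vertex set V, edge relation E, root r (the vertex 0),
  and the player labelling tau (1 = Alice, 2 = Bob) on interior vertices.\<close>

definition succs :: "('v \<times> 'v) set \<Rightarrow> 'v \<Rightarrow> 'v set" where
  "succs E v = {w. (v, w) \<in> E}"

definition bdry :: "'v set \<Rightarrow> ('v \<times> 'v) set \<Rightarrow> 'v set" where
  "bdry V E = {v \<in> V. succs E v = {}}"

definition interior :: "'v set \<Rightarrow> ('v \<times> 'v) set \<Rightarrow> 'v set" where
  "interior V E = V - bdry V E"

definition interior_of :: "'v set \<Rightarrow> ('v \<times> 'v) set \<Rightarrow> ('v \<Rightarrow> nat) \<Rightarrow> nat \<Rightarrow> 'v set" where
  "interior_of V E tau i = {v \<in> interior V E. tau v = i}"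

definition game_graph :: "'v set \<Rightarrow> ('v \<times> 'v) set \<Rightarrow> 'v \<Rightarrow> ('v \<Rightarrow> nat) \<Rightarrow> bool" where
  "game_graph V E r tau \<longleftrightarrow>
     finite V \<and> E \<subseteq> V \<times> V \<and> acyclic E \<and> r \<in> V \<and>
     (\<forall>v\<in>V. (r, v) \<in> E\<^sup>*) \<and>
     (\<forall>v\<in>interior V E. tau v \<in> {1, 2})"

definition strategies :: "'v set \<Rightarrow> ('v \<times> 'v) set \<Rightarrow> ('v \<Rightarrow> nat) \<Rightarrow> nat \<Rightarrow> ('v \<Rightarrow> 'v) set" where
  "strategies V E tau i = {\<sigma>. \<forall>v\<in>interior_of V E tau i. \<sigma> v \<in> succs E v}"

definition play_step :: "'v set \<Rightarrow> ('v \<times> 'v) set \<Rightarrow> ('v \<Rightarrow> nat) \<Rightarrow> ('v \<Rightarrow> 'v) \<Rightarrow> ('v \<Rightarrow> 'v) \<Rightarrow> ('v \<times> 'v) set" where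
  "play_step V E tau \<sigma>1 \<sigma>2 =
     {(v, w). v \<in> interior V E \<and> w = (if tau v = 1 then \<sigma>1 v else \<sigma>2 v)}"

definition outcome :: "'v set \<Rightarrow> ('v \<times> 'v) set \<Rightarrow> 'v \<Rightarrow> ('v \<Rightarrow> nat) \<Rightarrow> ('v \<Rightarrow> 'v) \<Rightarrow> ('v \<Rightarrow> 'v) \<Rightarrow> 'v" where
  "outcome V E r tau \<sigma>1 \<sigma>2 =
     (THE w. w \<in> bdry V E \<and> (r, w) \<in> (play_step V E tau \<sigma>1 \<sigma>2)\<^sup>*)"

definition Zset :: "'v set \<Rightarrow> ('v \<times> 'v) set \<Rightarrow> 'v \<Rightarrow> ('v \<Rightarrow> nat) \<Rightarrow> ('v \<Rightarrow> 'v) \<Rightarrow> 'v set" where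
  "Zset V E r tau \<sigma>1 = {outcome V E r tau \<sigma>1 \<sigma>' | \<sigma>'. \<sigma>' \<in> strategies V E tau 2}"

definition Aset :: "'v set \<Rightarrow> ('v \<times> 'v) set \<Rightarrow> 'v \<Rightarrow> ('v \<Rightarrow> nat) \<Rightarrow> ('v \<Rightarrow> 'v) \<Rightarrow> 'v set" where
  "Aset V E r tau \<sigma>2 = {outcome V E r tau \<sigma>' \<sigma>2 | \<sigma>'. \<sigma>' \<in> strategies V E tau 1}"

text \<open>The extension xbar of x (Boolean values: True = 1, False = 0): xbar is min over successors
  at Alice's vertices and max at Bob's vertices. On a finite acyclic graph the recursive
  definition is equivalent to the least predicate closed under the following rules;
  xbar_one x v means xbar(v) = 1.\<close>
inductive xbar_one :: "'v set \<Rightarrow> ('v \<times> 'v) set \<Rightarrow> ('v \<Rightarrow> nat) \<Rightarrow> ('v \<Rightarrow> bool) \<Rightarrow> 'v \<Rightarrow> bool"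
  for V E tau x where
  leaf: "v \<in> bdry V E \<Longrightarrow> x v \<Longrightarrow> xbar_one V E tau x v"
| alice: "v \<in> interior_of V E tau 1 \<Longrightarrow> (\<forall>w\<in>succs E v. xbar_one V E tau x w) \<Longrightarrow> xbar_one V E tau x v"
| bob: "v \<in> interior_of V E tau 2 \<Longrightarrow> (\<exists>w\<in>succs E v. xbar_one V E tau x w) \<Longrightarrow> xbar_one V E tau x v"

definition Lfun :: "'v set \<Rightarrow> ('v \<times> 'v) set \<Rightarrow> 'v \<Rightarrow> ('v \<Rightarrow> nat) \<Rightarrow> ('v \<Rightarrow> bool) \<Rightarrow> bool" where
  "Lfun V E r tau x = xbar_one V E tau x r"

definition one_sets :: "'v set \<Rightarrow> ('v \<times> 'v) set \<Rightarrow> 'v \<Rightarrow> ('v \<Rightarrow> nat) \<Rightarrow> 'v set set" where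
  "one_sets V E r tau = {A. A \<subseteq> bdry V E \<and> Lfun V E r tau (\<lambda>v. v \<in> A)}"

definition zero_sets :: "'v set \<Rightarrow> ('v \<times> 'v) set \<Rightarrow> 'v \<Rightarrow> ('v \<Rightarrow> nat) \<Rightarrow> 'v set set" where
  "zero_sets V E r tau = {Z. Z \<subseteq> bdry V E \<and> \<not> Lfun V E r tau (\<lambda>v. v \<notin> Z)}"

definition minimal_sets :: "'a set set \<Rightarrow> 'a set set" where
  "minimal_sets S = {X \<in> S. \<not> (\<exists>Y\<in>S. Y \<subset> X)}"

end

theory Submission
  imports Defs
begin

text \<open>For a fixed Boolean vector x, the player who wins at the root (Bob if xbar(0) = 1, Alice
  if xbar(0) = 0) can keep the value of xbar constant along the play by always moving to a
  successor with the same value; every outcome against such a strategy then carries that value.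
  Hence Z(\<sigma>1) is a zero-set, since otherwise Bob could force an outcome outside Z(\<sigma>1) against
  \<sigma>1; and for a minimal zero-set Z, Alice's value-keeping strategy for 1 - 1_Z has
  Z(\<sigma>1) \<subseteq> Z, so Z(\<sigma>1) = Z by minimality. One-sets are dual.\<close>

lemma minimal_setsD:
  "X \<in> minimal_sets S \<Longrightarrow> Y \<in> S \<Longrightarrow> Y \<subseteq> X \<Longrightarrow> Y = X"
  by (auto simp: minimal_sets_def)

lemma succs_nonempty_interior: "v \<in> interior V E \<Longrightarrow> succs E v \<noteq> {}"
  by (auto simp: interior_def bdry_def)

definition prefer_succ :: "('v \<times> 'v) set \<Rightarrow> ('v \<Rightarrow> bool) \<Rightarrow> 'v \<Rightarrow> 'v" where
  "prefer_succ E P v = (SOME w. w \<in> succs E v \<and> (P w \<or> (\<forall>w'\<in>succs E v. \<not> P w')))"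

lemma prefer_succ_spec:
  assumes "succs E v \<noteq> {}"
  shows "prefer_succ E P v \<in> succs E v \<and>
    (P (prefer_succ E P v) \<or> (\<forall>w'\<in>succs E v. \<not> P w'))"
proof -
  have "\<exists>w. w \<in> succs E v \<and> (P w \<or> (\<forall>w'\<in>succs E v. \<not> P w'))"
    using assms by blast
  then show ?thesis unfolding prefer_succ_def by (rule someI_ex)
qed

lemma prefer_succ_sat: "w \<in> succs E v \<Longrightarrow> P w \<Longrightarrow> P (prefer_succ E P v)"
  using prefer_succ_spec[of E v P] by blast

lemma prefer_succ_strategy: "prefer_succ E P \<in> strategies V E tau i"
  using prefer_succ_spec succs_nonempty_interior
  by (fastforce simp: strategies_def interior_of_def)

lemma xbar_one_bdry_iff: "v \<in> bdry V E \<Longrightarrow> xbar_one V E tau x v \<longleftrightarrow> x v"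
  by (auto elim: xbar_one.cases intro: xbar_one.leaf simp: interior_of_def interior_def)

lemma xbar_one_alice_iff:
  "v \<in> interior_of V E tau 1 \<Longrightarrow>
    xbar_one V E tau x v \<longleftrightarrow> (\<forall>w\<in>succs E v. xbar_one V E tau x w)"
  by (auto elim: xbar_one.cases intro: xbar_one.alice simp: interior_of_def interior_def)

lemma xbar_one_bob_iff:
  "v \<in> interior_of V E tau 2 \<Longrightarrow>
    xbar_one V E tau x v \<longleftrightarrow> (\<exists>w\<in>succs E v. xbar_one V E tau x w)"
  by (auto elim: xbar_one.cases intro: xbar_one.bob simp: interior_of_def interior_def)

lemma no_play_step_from_bdry: "u \<in> bdry V E \<Longrightarrow> (u, w) \<notin> play_step V E tau \<sigma>1 \<sigma>2"
  by (auto simp: play_step_def interior_def)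

lemma single_valued_play_step: "single_valued (play_step V E tau \<sigma>1 \<sigma>2)"
  by (auto simp: single_valued_def play_step_def)

lemma play_reach_bdry_unique:
  assumes "(v, u1) \<in> (play_step V E tau \<sigma>1 \<sigma>2)\<^sup>*" "u1 \<in> bdry V E"
    and "(v, u2) \<in> (play_step V E tau \<sigma>1 \<sigma>2)\<^sup>*" "u2 \<in> bdry V E"
  shows "u1 = u2"
proof -
  have "(u1, u2) \<in> (play_step V E tau \<sigma>1 \<sigma>2)\<^sup>* \<or> (u2, u1) \<in> (play_step V E tau \<sigma>1 \<sigma>2)\<^sup>*"
    using single_valued_confluent[OF single_valued_play_step assms(1,3)] .
  then show ?thesis
    using assms(2,4) by (auto elim: converse_rtranclE dest: no_play_step_from_bdry)
qed

context
  fixes V :: "'v set" and E :: "('v \<times> 'v) set" and r :: 'v and tau :: "'v \<Rightarrow> nat"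
  assumes game: "game_graph V E r tau"
begin

lemma play_step_cases:
  assumes "(y, z) \<in> play_step V E tau \<sigma>1 \<sigma>2"
  obtains "y \<in> interior_of V E tau 1" "z = \<sigma>1 y"
        | "y \<in> interior_of V E tau 2" "z = \<sigma>2 y"
  using assms game by (auto simp: play_step_def interior_of_def game_graph_def)

lemma play_step_subset:
  assumes "\<sigma>1 \<in> strategies V E tau 1" "\<sigma>2 \<in> strategies V E tau 2"
  shows "play_step V E tau \<sigma>1 \<sigma>2 \<subseteq> E"
  using assms by (auto elim: play_step_cases simp: strategies_def succs_def)

lemma play_reaches_bdry:
  assumes \<sigma>1: "\<sigma>1 \<in> strategies V E tau 1" and \<sigma>2: "\<sigma>2 \<in> strategies V E tau 2"
    and "v \<in> V"
  obtains u where "(v, u) \<in> (play_step V E tau \<sigma>1 \<sigma>2)\<^sup>*" "u \<in> bdry V E"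
proof -
  let ?P = "play_step V E tau \<sigma>1 \<sigma>2"
  have EV: "E \<subseteq> V \<times> V" and "finite V" "acyclic E"
    using game by (auto simp: game_graph_def)
  then have "finite E" by (meson finite_SigmaI finite_subset)
  then have "wf (?P\<inverse>)"
    using finite_acyclic_wf_converse[OF _ \<open>acyclic E\<close>] play_step_subset[OF \<sigma>1 \<sigma>2]
    by (meson converse_mono wf_subset)
  then obtain u where reach: "(v, u) \<in> ?P\<^sup>*" and final: "\<And>w. (u, w) \<in> ?P \<Longrightarrow> (v, w) \<notin> ?P\<^sup>*"
    by (rule wfE_min[where x = v and Q = "{u. (v, u) \<in> ?P\<^sup>*}"]) auto
  have "u \<in> V"
    using reach
  proof (cases rule: rtranclE)
    case (step w)
    then show ?thesis using EV play_step_subset[OF \<sigma>1 \<sigma>2] by blast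
  qed (use \<open>v \<in> V\<close> in simp)
  moreover have "u \<notin> interior V E"
  proof
    assume "u \<in> interior V E"
    then have "(u, if tau u = 1 then \<sigma>1 u else \<sigma>2 u) \<in> ?P" by (simp add: play_step_def)
    with final reach show False by (meson rtrancl.rtrancl_into_rtrancl)
  qed
  ultimately have "u \<in> bdry V E" by (simp add: interior_def)
  with reach show thesis by (rule that)
qed

lemma outcome_reach_bdry:
  assumes "\<sigma>1 \<in> strategies V E tau 1" "\<sigma>2 \<in> strategies V E tau 2"
  shows "(r, outcome V E r tau \<sigma>1 \<sigma>2) \<in> (play_step V E tau \<sigma>1 \<sigma>2)\<^sup>*"
    and "outcome V E r tau \<sigma>1 \<sigma>2 \<in> bdry V E"
proof -
  have "r \<in> V" using game by (simp add: game_graph_def)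
  then obtain u where "(r, u) \<in> (play_step V E tau \<sigma>1 \<sigma>2)\<^sup>*" "u \<in> bdry V E"
    using play_reaches_bdry[OF assms] by blast
  then have "\<exists>!u. u \<in> bdry V E \<and> (r, u) \<in> (play_step V E tau \<sigma>1 \<sigma>2)\<^sup>*"
    using play_reach_bdry_unique by metis
  then have "outcome V E r tau \<sigma>1 \<sigma>2 \<in> bdry V E \<and>
      (r, outcome V E r tau \<sigma>1 \<sigma>2) \<in> (play_step V E tau \<sigma>1 \<sigma>2)\<^sup>*"
    unfolding outcome_def by (rule theI')
  then show "(r, outcome V E r tau \<sigma>1 \<sigma>2) \<in> (play_step V E tau \<sigma>1 \<sigma>2)\<^sup>*"
    and "outcome V E r tau \<sigma>1 \<sigma>2 \<in> bdry V E" by auto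
qed

lemma bob_keeps_xbar_one:
  assumes \<sigma>1: "\<sigma>1 \<in> strategies V E tau 1" and root: "xbar_one V E tau x r"
  shows "x (outcome V E r tau \<sigma>1 (prefer_succ E (xbar_one V E tau x)))"
proof -
  let ?\<sigma>2 = "prefer_succ E (xbar_one V E tau x)"
  have \<sigma>2: "?\<sigma>2 \<in> strategies V E tau 2" by (rule prefer_succ_strategy)
  have "xbar_one V E tau x u"
    if "(r, u) \<in> (play_step V E tau \<sigma>1 ?\<sigma>2)\<^sup>*" for u
    using that
  proof (induction rule: rtrancl_induct)
    case base
    show ?case using root .
  next
    case (step y z)
    from step.hyps(2) show ?case
    proof (cases rule: play_step_cases)
      case 1
      then have "z \<in> succs E y" using \<sigma>1 by (simp add: strategies_def)
      then show ?thesis using step.IH xbar_one_alice_iff[OF 1(1)] by blast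
    next
      case 2
      then obtain w where "w \<in> succs E y" "xbar_one V E tau x w"
        using step.IH xbar_one_bob_iff[OF 2(1)] by blast
      then show ?thesis using 2(2) by (simp add: prefer_succ_sat)
    qed
  qed
  then have "xbar_one V E tau x (outcome V E r tau \<sigma>1 ?\<sigma>2)"
    using outcome_reach_bdry(1)[OF \<sigma>1 \<sigma>2] .
  then show ?thesis using xbar_one_bdry_iff[OF outcome_reach_bdry(2)[OF \<sigma>1 \<sigma>2]] by simp
qed

lemma alice_keeps_xbar_zero:
  assumes \<sigma>2: "\<sigma>2 \<in> strategies V E tau 2" and root: "\<not> xbar_one V E tau x r"
  shows "\<not> x (outcome V E r tau (prefer_succ E (\<lambda>w. \<not> xbar_one V E tau x w)) \<sigma>2)"
proof -
  let ?\<sigma>1 = "prefer_succ E (\<lambda>w. \<not> xbar_one V E tau x w)"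
  have \<sigma>1: "?\<sigma>1 \<in> strategies V E tau 1" by (rule prefer_succ_strategy)
  have "\<not> xbar_one V E tau x u"
    if "(r, u) \<in> (play_step V E tau ?\<sigma>1 \<sigma>2)\<^sup>*" for u
    using that
  proof (induction rule: rtrancl_induct)
    case base
    show ?case using root .
  next
    case (step y z)
    from step.hyps(2) show ?case
    proof (cases rule: play_step_cases)
      case 1
      then obtain w where "w \<in> succs E y" "\<not> xbar_one V E tau x w"
        using step.IH xbar_one_alice_iff[OF 1(1)] by blast
      then show ?thesis
        using 1(2) prefer_succ_sat[where P = "\<lambda>w. \<not> xbar_one V E tau x w"] by simp
    next
      case 2
      then have "z \<in> succs E y" using \<sigma>2 by (simp add: strategies_def)
      then show ?thesis using step.IH xbar_one_bob_iff[OF 2(1)] by blast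
    qed
  qed
  then have "\<not> xbar_one V E tau x (outcome V E r tau ?\<sigma>1 \<sigma>2)"
    using outcome_reach_bdry(1)[OF \<sigma>1 \<sigma>2] .
  then show ?thesis using xbar_one_bdry_iff[OF outcome_reach_bdry(2)[OF \<sigma>1 \<sigma>2]] by simp
qed

lemma Zset_subset_bdry: "\<sigma>1 \<in> strategies V E tau 1 \<Longrightarrow> Zset V E r tau \<sigma>1 \<subseteq> bdry V E"
  using outcome_reach_bdry by (auto simp: Zset_def)

lemma Aset_subset_bdry: "\<sigma>2 \<in> strategies V E tau 2 \<Longrightarrow> Aset V E r tau \<sigma>2 \<subseteq> bdry V E"
  using outcome_reach_bdry by (auto simp: Aset_def)

lemma Zset_in_zero_sets:
  assumes \<sigma>1: "\<sigma>1 \<in> strategies V E tau 1"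
  shows "Zset V E r tau \<sigma>1 \<in> zero_sets V E r tau"
proof -
  let ?Z = "Zset V E r tau \<sigma>1" and ?x = "\<lambda>v. v \<notin> Zset V E r tau \<sigma>1"
  have "prefer_succ E (xbar_one V E tau ?x) \<in> strategies V E tau 2"
    by (rule prefer_succ_strategy)
  then have "outcome V E r tau \<sigma>1 (prefer_succ E (xbar_one V E tau ?x)) \<in> ?Z"
    unfolding Zset_def by blast
  then have "\<not> xbar_one V E tau ?x r"
    using bob_keeps_xbar_one[OF \<sigma>1] by blast
  then show ?thesis
    using Zset_subset_bdry[OF \<sigma>1] by (simp add: zero_sets_def Lfun_def)
qed

lemma Aset_in_one_sets:
  assumes \<sigma>2: "\<sigma>2 \<in> strategies V E tau 2"
  shows "Aset V E r tau \<sigma>2 \<in> one_sets V E r tau"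
proof -
  let ?A = "Aset V E r tau \<sigma>2" and ?x = "\<lambda>v. v \<in> Aset V E r tau \<sigma>2"
  have "prefer_succ E (\<lambda>w. \<not> xbar_one V E tau ?x w) \<in> strategies V E tau 1"
    by (rule prefer_succ_strategy)
  then have "outcome V E r tau (prefer_succ E (\<lambda>w. \<not> xbar_one V E tau ?x w)) \<sigma>2 \<in> ?A"
    unfolding Aset_def by blast
  then have "xbar_one V E tau ?x r"
    using alice_keeps_xbar_zero[OF \<sigma>2] by blast
  then show ?thesis
    using Aset_subset_bdry[OF \<sigma>2] by (simp add: one_sets_def Lfun_def)
qed

lemma Zset_prefer_succ_subset:
  assumes "Z \<in> zero_sets V E r tau"
  shows "Zset V E r tau (prefer_succ E (\<lambda>w. \<not> xbar_one V E tau (\<lambda>v. v \<notin> Z) w)) \<subseteq> Z"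
  using assms alice_keeps_xbar_zero
  by (auto simp: Zset_def zero_sets_def Lfun_def)

lemma Aset_prefer_succ_subset:
  assumes "A \<in> one_sets V E r tau"
  shows "Aset V E r tau (prefer_succ E (xbar_one V E tau (\<lambda>v. v \<in> A))) \<subseteq> A"
  using assms bob_keeps_xbar_one
  by (auto simp: Aset_def one_sets_def Lfun_def)

lemma minimal_zero_set_is_Zset:
  assumes Z: "Z \<in> minimal_sets (zero_sets V E r tau)"
  shows "\<exists>\<sigma>1 \<in> strategies V E tau 1. Z = Zset V E r tau \<sigma>1"
proof -
  let ?\<sigma>1 = "prefer_succ E (\<lambda>w. \<not> xbar_one V E tau (\<lambda>v. v \<notin> Z) w)"
  have "Z \<in> zero_sets V E r tau" using Z by (simp add: minimal_sets_def)
  then have "Zset V E r tau ?\<sigma>1 = Z"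
    using minimal_setsD[OF Z] Zset_in_zero_sets prefer_succ_strategy Zset_prefer_succ_subset
    by blast
  then show ?thesis using prefer_succ_strategy by metis
qed

lemma minimal_one_set_is_Aset:
  assumes A: "A \<in> minimal_sets (one_sets V E r tau)"
  shows "\<exists>\<sigma>2 \<in> strategies V E tau 2. A = Aset V E r tau \<sigma>2"
proof -
  let ?\<sigma>2 = "prefer_succ E (xbar_one V E tau (\<lambda>v. v \<in> A))"
  have "A \<in> one_sets V E r tau" using A by (simp add: minimal_sets_def)
  then have "Aset V E r tau ?\<sigma>2 = A"
    using minimal_setsD[OF A] Aset_in_one_sets prefer_succ_strategy Aset_prefer_succ_subset
    by blast
  then show ?thesis using prefer_succ_strategy by metis
qed

end

theorem lemma7:
  fixes V :: "'v set" and E :: "('v \<times> 'v) set" and r :: 'v and tau :: "'v \<Rightarrow> nat"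
  assumes "game_graph V E r tau"
  shows "minimal_sets (zero_sets V E r tau) \<subseteq> {Zset V E r tau \<sigma>1 | \<sigma>1. \<sigma>1 \<in> strategies V E tau 1}
       \<and> {Zset V E r tau \<sigma>1 | \<sigma>1. \<sigma>1 \<in> strategies V E tau 1} \<subseteq> zero_sets V E r tau
       \<and> minimal_sets (one_sets V E r tau) \<subseteq> {Aset V E r tau \<sigma>2 | \<sigma>2. \<sigma>2 \<in> strategies V E tau 2}
       \<and> {Aset V E r tau \<sigma>2 | \<sigma>2. \<sigma>2 \<in> strategies V E tau 2} \<subseteq> one_sets V E r tau"
proof (intro conjI subsetI)
  fix Z assume "Z \<in> minimal_sets (zero_sets V E r tau)"
  then show "Z \<in> {Zset V E r tau \<sigma>1 | \<sigma>1. \<sigma>1 \<in> strategies V E tau 1}"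
    using minimal_zero_set_is_Zset[OF assms] by blast
next
  fix Z assume "Z \<in> {Zset V E r tau \<sigma>1 | \<sigma>1. \<sigma>1 \<in> strategies V E tau 1}"
  then show "Z \<in> zero_sets V E r tau" using Zset_in_zero_sets[OF assms] by blast
next
  fix A assume "A \<in> minimal_sets (one_sets V E r tau)"
  then show "A \<in> {Aset V E r tau \<sigma>2 | \<sigma>2. \<sigma>2 \<in> strategies V E tau 2}"
    using minimal_one_set_is_Aset[OF assms] by blast
next
  fix A assume "A \<in> {Aset V E r tau \<sigma>2 | \<sigma>2. \<sigma>2 \<in> strategies V E tau 2}"
  then show "A \<in> one_sets V E r tau" using Aset_in_one_sets[OF assms] by blast
qed

end
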